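(* Assume Hypothesis (H). Let $\mathfrak k,\mathfrak k'$ be Lie subalgebras with $\mathfrak h\subsetneq\mathfrak k'\subsetneq\mathfrak k\subset\mathfrak g$, set $\mathfrak j=\mathfrak g\ominus\mathfrak k$, $\mathfrak l=\mathfrak k\ominus\mathfrak k'$, $\mathfrak n=\mathfrak k'\ominus\mathfrak h$, $J_{\mathfrak j}=\{1,\dots,s\}\setminus J_{\mathfrak k}$, $J_{\mathfrak l}=J_{\mathfrak k}\setminus J_{\mathfrak k'}$. Let $g\in\mathcal M(\mathfrak k)$ and suppose the decomposition satisfies $g=\sum_{i\in J_{\mathfrak k}}x_i\,\pi_{\mathfrak m_i}^*Q$ with $x_i>0$. Then $$\hat S_{\mathfrak k}(g)=S(g|_{\mathfrak n})+S(g|_{\mathfrak l})-\frac12\sum_{i\in J_{\mathfrak k}}\sum_{j,k\in J_{\mathfrak j}}\frac{[ijk]}{x_i}-\frac14\sum_{i,j\in J_{\mathfrak l}}\sum_{k\in J_{\mathfrak k'}}[ijk]\Big(\frac{x_k}{x_ix_j}+2\frac{x_i}{x_jx_k}\Big),$$ and $$\hat S_{\mathfrak k}(g)\le\hat S_{\mathfrak k'}(g|_{\mathfrak n})+S(g|_{\mathfrak l}).$$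
   Context: Let $G$ be a compact connected Lie group with Lie algebra $\mathfrak g$ and $H<G$ a closed connected subgroup with Lie algebra $\mathfrak h$; $M=G/H$, $\dim M\ge3$. Fix an $\mathrm{Ad}(G)$-invariant inner product $Q$ on $\mathfrak g$; $\mathfrak v\ominus\mathfrak u$ is the $Q$-orthogonal complement, $\pi_{\mathfrak u}$ the $Q$-orthogonal projection, $\oplus$ the $Q$-orthogonal sum, $\mathfrak m=\mathfrak g\ominus\mathfrak h$. $B$ is the Killing form of $\mathfrak g$. Hypothesis (H): every Lie subalgebra $\mathfrak s\subset\mathfrak g$ with $\mathfrak h\subsetneq\mathfrak s$ satisfies (1) for all nonzero $\mathrm{Ad}(H)$-invariant subspaces $\mathfrak u\subset\mathfrak s\ominus\mathfrak h$ and $\mathfrak v\subset\mathfrak g\ominus\mathfrak s$, the representations $\mathrm{Ad}(H)|_{\mathfrak u}$ and $\mathrm{Ad}(H)|_{\mathfrak v}$ are inequivalent; (2) $[\mathfrak r,\mathfrak s]\neq\{0\}$ for every $\mathrm{Ad}(H)$-invariant one-dimensional subspace $\mathfrak r\subset\mathfrak g\ominus\mathfrak s$. $\mathfrak m=\mathfrak m_1\oplus\cdots\oplus\mathfrak m_s$ is a $Q$-orthogonal decomposition into $\mathrm{Ad}(H)$-invariant, $\mathrm{Ad}(H)$-irreducible subspaces; $[ijk]=\sum_{a,b}Q(\pi_{\mathfrak m_i}[e_a,f_b],\pi_{\mathfrak m_i}[e_a,f_b])$ with $(e_a),(f_b)$ $Q$-orthonormal bases of $\mathfrak m_j,\mathfrak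 m_k$. For a Lie subalgebra $\mathfrak k\supset\mathfrak h$, $J_{\mathfrak k}$ is the set of indices with $\mathfrak k\ominus\mathfrak h=\bigoplus_{j\in J_{\mathfrak k}}\mathfrak m_j$ (it exists under (H)). For an $\mathrm{Ad}(H)$-invariant inner product $g$ on a nonzero $\mathrm{Ad}(H)$-invariant subspace $\mathfrak u\subset\mathfrak m$, $S(g)=-\frac12\mathrm{tr}_gB|_{\mathfrak u}-\frac14\sum_{a,b}g(\pi_{\mathfrak u}[e_a,e_b],\pi_{\mathfrak u}[e_a,e_b])$, with $(e_a)$ a $g$-orthonormal basis of $\mathfrak u$ (for $\mathfrak u=\mathfrak m$ this is the scalar curvature). For a Lie subalgebra $\mathfrak k$ with $\mathfrak h\subsetneq\mathfrak k$, $\mathcal M(\mathfrak k)$ is the set of $\mathrm{Ad}(H)$-invariant inner products on $\mathfrak k\ominus\mathfrak h$, and for $g\in\mathcal M(\mathfrak k)$, $$\hat S_{\mathfrak k}(g)=S(g)-\frac12\sum_{a,b}Q\big(\pi_{\mathfrak g\ominus\mathfrak k}[e_a,f_b],\pi_{\mathfrak g\ominus\mathfrak k}[e_a,f_b]\big),$$ where $(e_a)$ is a $g$-orthonormal basis of $\mathfrak k\ominus\mathfrak h$ and $(f_b)$ a $Q$-orthonormal basis of $\mathfrak g\ominus\mathfrak k$ (so $\hat S_{\mathfrak g}=S$). *)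

theory Defs
  imports "HOL-Analysis.Analysis"
begin

(* The Lie algebra g is modelled by a Euclidean space 'a whose inner product is Q,
   with a Lie bracket br.  Ad(H)-notions are expressed through ad(h) (H connected). *)

definition ocomp :: "'a::euclidean_space set \<Rightarrow> 'a set \<Rightarrow> 'a set" where
  "ocomp V U = {x \<in> V. \<forall>y\<in>U. inner x y = 0}"

definition proj :: "'a::euclidean_space set \<Rightarrow> 'a \<Rightarrow> 'a" where
  "proj U x = (THE y. y \<in> U \<and> (\<forall>z\<in>U. inner (x - y) z = 0))"

definition lie_algebra :: "('a::euclidean_space \<Rightarrow> 'a \<Rightarrow> 'a) \<Rightarrow> bool" where
  "lie_algebra br \<longleftrightarrow> bilinear br \<and> (\<forall>x. br x x = 0) \<and>
     (\<forall>x y z. br x (br y z) + br y (br z x) + br z (br x y) = 0)"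

definition Q_ad_invariant :: "('a::euclidean_space \<Rightarrow> 'a \<Rightarrow> 'a) \<Rightarrow> bool" where
  "Q_ad_invariant br \<longleftrightarrow> (\<forall>x y z. inner (br x y) z + inner y (br x z) = 0)"

definition lie_subalg :: "('a::euclidean_space \<Rightarrow> 'a \<Rightarrow> 'a) \<Rightarrow> 'a set \<Rightarrow> bool" where
  "lie_subalg br S \<longleftrightarrow> subspace S \<and> (\<forall>x\<in>S. \<forall>y\<in>S. br x y \<in> S)"

definition killing :: "('a::euclidean_space \<Rightarrow> 'a \<Rightarrow> 'a) \<Rightarrow> 'a \<Rightarrow> 'a \<Rightarrow> real" where
  "killing br X Y = (\<Sum>b\<in>Basis. inner (br X (br Y b)) b)"

(* Ad(H)-invariance of a subspace (H connected: equivalent to ad(h)-invariance) *)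
definition h_inv :: "('a::euclidean_space \<Rightarrow> 'a \<Rightarrow> 'a) \<Rightarrow> 'a set \<Rightarrow> 'a set \<Rightarrow> bool" where
  "h_inv br h U \<longleftrightarrow> (\<forall>X\<in>h. \<forall>Y\<in>U. br X Y \<in> U)"

definition h_equiv :: "('a::euclidean_space \<Rightarrow> 'a \<Rightarrow> 'a) \<Rightarrow> 'a set \<Rightarrow> 'a set \<Rightarrow> 'a set \<Rightarrow> bool" where
  "h_equiv br h U V \<longleftrightarrow> (\<exists>T. linear T \<and> bij_betw T U V \<and>
      (\<forall>X\<in>h. \<forall>Y\<in>U. T (br X Y) = br X (T Y)))"

definition hypH :: "('a::euclidean_space \<Rightarrow> 'a \<Rightarrow> 'a) \<Rightarrow> 'a set \<Rightarrow> bool" where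
  "hypH br h \<longleftrightarrow> (\<forall>S. lie_subalg br S \<and> h \<subset> S \<longrightarrow>
      (\<forall>U V. subspace U \<and> subspace V \<and> U \<noteq> {0} \<and> V \<noteq> {0} \<and>
             U \<subseteq> ocomp S h \<and> V \<subseteq> ocomp UNIV S \<and> h_inv br h U \<and> h_inv br h V
             \<longrightarrow> \<not> h_equiv br h U V) \<and>
      (\<forall>R. subspace R \<and> dim R = 1 \<and> R \<subseteq> ocomp UNIV S \<and> h_inv br h R
             \<longrightarrow> (\<exists>X\<in>R. \<exists>Y\<in>S. br X Y \<noteq> 0)))"

definition h_irreducible :: "('a::euclidean_space \<Rightarrow> 'a \<Rightarrow> 'a) \<Rightarrow> 'a set \<Rightarrow> 'a set \<Rightarrow> bool" where
  "h_irreducible br h U \<longleftrightarrow> subspace U \<and> U \<noteq> {0} \<and> h_inv br h U \<and>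
     (\<forall>W. subspace W \<and> W \<subseteq> U \<and> h_inv br h W \<longrightarrow> W = {0} \<or> W = U)"

definition isotropy_decomp ::
  "('a::euclidean_space \<Rightarrow> 'a \<Rightarrow> 'a) \<Rightarrow> 'a set \<Rightarrow> nat \<Rightarrow> (nat \<Rightarrow> 'a set) \<Rightarrow> bool" where
  "isotropy_decomp br h s m \<longleftrightarrow> (\<forall>i\<in>{1..s}. h_irreducible br h (m i)) \<and>
     (\<forall>i\<in>{1..s}. \<forall>j\<in>{1..s}. i \<noteq> j \<longrightarrow> (\<forall>x\<in>m i. \<forall>y\<in>m j. inner x y = 0)) \<and>
     span (\<Union>i\<in>{1..s}. m i) = ocomp UNIV h"

definition Jidx :: "nat \<Rightarrow> (nat \<Rightarrow> 'a::euclidean_space set) \<Rightarrow> 'a set \<Rightarrow> 'a set \<Rightarrow> nat set" where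
  "Jidx s m h K = (THE J. J \<subseteq> {1..s} \<and> span (\<Union>j\<in>J. m j) = ocomp K h)"

definition onb :: "'a::euclidean_space set \<Rightarrow> 'a set" where
  "onb U = (SOME B. B \<subseteq> U \<and> pairwise orthogonal B \<and> (\<forall>x\<in>B. norm x = 1) \<and>
                     independent B \<and> span B = U)"

definition brkt :: "('a::euclidean_space \<Rightarrow> 'a \<Rightarrow> 'a) \<Rightarrow> (nat \<Rightarrow> 'a set) \<Rightarrow> nat \<Rightarrow> nat \<Rightarrow> nat \<Rightarrow> real" where
  "brkt br m i j k = (\<Sum>a\<in>onb (m j). \<Sum>b\<in>onb (m k). (norm (proj (m i) (br a b)))\<^sup>2)"

definition gonb :: "('a::euclidean_space \<Rightarrow> 'a \<Rightarrow> real) \<Rightarrow> 'a set \<Rightarrow> 'a set" where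
  "gonb gf U = (SOME B. finite B \<and> B \<subseteq> U \<and> span B = U \<and>
                   (\<forall>e\<in>B. \<forall>f\<in>B. gf e f = (if e = f then 1 else 0)))"

definition scal :: "('a::euclidean_space \<Rightarrow> 'a \<Rightarrow> 'a) \<Rightarrow> ('a \<Rightarrow> 'a \<Rightarrow> real) \<Rightarrow> 'a set \<Rightarrow> real" where
  "scal br gf U = - 1/2 * (\<Sum>e\<in>gonb gf U. killing br e e)
     - 1/4 * (\<Sum>a\<in>gonb gf U. \<Sum>b\<in>gonb gf U. gf (proj U (br a b)) (proj U (br a b)))"

definition Shat :: "('a::euclidean_space \<Rightarrow> 'a \<Rightarrow> 'a) \<Rightarrow> 'a set \<Rightarrow> ('a \<Rightarrow> 'a \<Rightarrow> real) \<Rightarrow> 'a set \<Rightarrow> real" where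
  "Shat br h gf K = scal br gf (ocomp K h)
     - 1/2 * (\<Sum>a\<in>gonb gf (ocomp K h). \<Sum>b\<in>onb (ocomp UNIV K).
                 (norm (proj (ocomp UNIV K) (br a b)))\<^sup>2)"

definition Mk :: "('a::euclidean_space \<Rightarrow> 'a \<Rightarrow> 'a) \<Rightarrow> 'a set \<Rightarrow> 'a set \<Rightarrow> ('a \<Rightarrow> 'a \<Rightarrow> real) \<Rightarrow> bool" where
  "Mk br h K gf \<longleftrightarrow> (let U = ocomp K h in
     (\<forall>x\<in>U. \<forall>y\<in>U. \<forall>z\<in>U. \<forall>c. gf (x + y) z = gf x z + gf y z \<and> gf (c *\<^sub>R x) z = c * gf x z) \<and>
     (\<forall>x\<in>U. \<forall>y\<in>U. gf x y = gf y x) \<and>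
     (\<forall>x\<in>U. x \<noteq> 0 \<longrightarrow> gf x x > 0) \<and>
     (\<forall>X\<in>h. \<forall>Y\<in>U. \<forall>Z\<in>U. gf (br X Y) Z + gf Y (br X Z) = 0))"

end

theory Submission
  imports Defs
begin

text \<open>The first half of Hypothesis (H), combined with Schur's lemma, forces each \<open>m i\<close> to lie
  inside or orthogonal to every subalgebra strictly containing \<open>\<frak>h\<close>; hence \<open>\<frak>k' \<ominus> \<frak>h\<close>,
  \<open>\<frak>k \<ominus> \<frak>k'\<close> and \<open>\<frak>g \<ominus> \<frak>k\<close> are the sums of the \<open>m i\<close> over \<open>N = J\<^sub>k\<^sub>'\<close>, \<open>L = J\<^sub>k - J\<^sub>k\<^sub>'\<close> and
  \<open>C = {1..s} - J\<^sub>k\<close>. For a metric diagonal in the decomposition, a trace over a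
  \<open>g\<close>-orthonormal basis is a weighted trace over \<open>Q\<close>-orthonormal bases of the \<open>m i\<close>, so all terms
  become sums of the structure constants \<open>[ijk]\<close>, which are totally symmetric and non-negative.
  Splitting the triple sum over \<open>N \<union> L\<close>, the terms with exactly one index in \<open>L\<close> vanish
  because \<open>[\<frak>k', \<frak>k'] \<subseteq> \<frak>k'\<close>, which gives the identity. For the inequality, \<open>[\<frak>k, \<frak>k] \<subseteq> \<frak>k\<close>
  splits the \<open>\<frak>g \<ominus> \<frak>k'\<close>-term of \<open>Shat\<close> at \<open>\<frak>k'\<close>, and what remains is
  \<open>\<Sum> [ijk]/x\<^sub>k \<le> \<Sum> [ijk] x\<^sub>i/(x\<^sub>j x\<^sub>k)\<close> over \<open>i, j \<in> L, k \<in> N\<close>, which is AM-GM in the form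
  \<open>x\<^sub>i/x\<^sub>j + x\<^sub>j/x\<^sub>i \<ge> 2\<close>.\<close>

lemma orthogonal_projection_unique:
  fixes U :: "'a::euclidean_space set"
  assumes "subspace U" "y \<in> U" "\<forall>w\<in>U. inner (x - y) w = 0" "y' \<in> U" "\<forall>w\<in>U. inner (x - y') w = 0"
  shows "y' = y"
proof -
  have "y - y' \<in> U" using assms subspace_diff by blast
  then have "inner (x - y') (y - y') - inner (x - y) (y - y') = 0" using assms by simp
  then have "inner (y - y') (y - y') = 0" by (simp add: inner_diff_left)
  then show ?thesis by simp
qed

lemma orthogonal_projection_exists:
  fixes U :: "'a::euclidean_space set"
  assumes "subspace U"
  shows "\<exists>y\<in>U. \<forall>w\<in>U. inner (x - y) w = 0"
proof -
  obtain y z where y: "y \<in> span U" and z: "\<And>w. w \<in> span U \<Longrightarrow> orthogonal z w" and "x = y + z"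
    using orthogonal_subspace_decomp_exists[of U x] by blast
  have "y \<in> U" using y assms span_eq_iff by blast
  moreover have "inner (x - y) w = 0" if "w \<in> U" for w
    using z[OF span_base[OF that]] \<open>x = y + z\<close> by (simp add: orthogonal_def)
  ultimately show ?thesis by blast
qed

lemma subspace_ocomp: "subspace V \<Longrightarrow> subspace (ocomp V U)"
  unfolding ocomp_def subspace_def by (auto simp: inner_add_left)

lemma proj_unique:
  fixes U :: "'a::euclidean_space set"
  assumes "subspace U" "y \<in> U" "\<forall>w\<in>U. inner (x - y) w = 0"
  shows "proj U x = y"
  unfolding proj_def
  by (rule the_equality) (use assms orthogonal_projection_unique[OF assms] in blast)+

lemma
  fixes U :: "'a::euclidean_space set"
  assumes "subspace U"
  shows proj_in: "proj U x \<in> U"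
    and proj_orth: "w \<in> U \<Longrightarrow> inner (x - proj U x) w = 0"
proof -
  obtain y where "y \<in> U" "\<forall>w\<in>U. inner (x - y) w = 0"
    using orthogonal_projection_exists[OF assms] by blast
  moreover from this have "proj U x = y" by (rule proj_unique[OF assms])
  ultimately show "proj U x \<in> U" and "w \<in> U \<Longrightarrow> inner (x - proj U x) w = 0" by auto
qed

lemma proj_inner: "subspace U \<Longrightarrow> w \<in> U \<Longrightarrow> inner (proj U x) w = inner x w"
  using proj_orth[of U w x] by (simp add: inner_diff_left)

lemma linear_proj:
  fixes U :: "'a::euclidean_space set"
  assumes U: "subspace U"
  shows "linear (proj U)"
proof (rule linearI)
  show "proj U (x + y) = proj U x + proj U y" for x y
    by (rule proj_unique[OF U])
      (simp_all add: U proj_in proj_inner subspace_add inner_diff_left inner_add_left)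
  show "proj U (c *\<^sub>R x) = c *\<^sub>R proj U x" for c x
    by (rule proj_unique[OF U])
      (simp_all add: U proj_in proj_inner subspace_scale inner_diff_left)
qed

definition orthonormal_family :: "'i set \<Rightarrow> ('i \<Rightarrow> 'a::real_inner) \<Rightarrow> bool" where
  "orthonormal_family I e \<longleftrightarrow> (\<forall>p\<in>I. \<forall>q\<in>I. inner (e p) (e q) = (if p = q then 1 else 0))"

definition orthonormal_on :: "('a \<Rightarrow> 'a \<Rightarrow> real) \<Rightarrow> 'a set \<Rightarrow> bool" where
  "orthonormal_on G B \<longleftrightarrow> (\<forall>b\<in>B. \<forall>b'\<in>B. G b b' = (if b = b' then 1 else 0))"

lemma
  fixes U :: "'a::euclidean_space set"
  assumes "subspace U"
  shows finite_onb: "finite (onb U)"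
    and onb_subset: "onb U \<subseteq> U"
    and span_onb: "span (onb U) = U"
    and orthonormal_onb: "orthonormal_family (onb U) id"
proof -
  obtain B where "B \<subseteq> U" "pairwise orthogonal B" "\<And>x. x \<in> B \<Longrightarrow> norm x = 1"
     "independent B" "span B = U"
    using orthonormal_basis_subspace[OF assms] by metis
  then have "\<exists>B. B \<subseteq> U \<and> pairwise orthogonal B \<and> (\<forall>x\<in>B. norm x = 1) \<and> independent B \<and> span B = U"
    by blast
  from someI_ex[OF this] have B: "onb U \<subseteq> U" "pairwise orthogonal (onb U)" "\<forall>x\<in>onb U. norm x = 1"
      "independent (onb U)" "span (onb U) = U"
    unfolding onb_def by blast+
  show "finite (onb U)" using B independent_imp_finite by blast
  show "onb U \<subseteq> U" "span (onb U) = U" using B by auto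
  show "orthonormal_family (onb U) id"
    using B by (auto simp: orthonormal_family_def pairwise_def orthogonal_def dot_square_norm)
qed

lemma orthonormal_expansion:
  fixes e :: "'i \<Rightarrow> 'a::euclidean_space"
  assumes fin: "finite I" and on: "orthonormal_family I e" and u: "u \<in> span (e ` I)"
  shows "u = (\<Sum>p\<in>I. inner u (e p) *\<^sub>R e p)"
proof -
  define r where "r = u - (\<Sum>p\<in>I. inner u (e p) *\<^sub>R e p)"
  have r_perp: "inner r (e q) = 0" if "q \<in> I" for q
  proof -
    have "inner (\<Sum>p\<in>I. inner u (e p) *\<^sub>R e p) (e q) = (\<Sum>p\<in>I. if p = q then inner u (e q) else 0)"
      unfolding inner_sum_left
      by (rule sum.cong) (use on that in \<open>auto simp: orthonormal_family_def\<close>)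
    also have "\<dots> = inner u (e q)" using fin that by simp
    finally show ?thesis by (simp add: r_def inner_diff_left)
  qed
  have "r \<in> span (e ` I)"
    unfolding r_def by (intro span_diff u span_sum span_scale span_base) auto
  then have "orthogonal r r"
    by (rule orthogonal_to_span) (use r_perp in \<open>auto simp: orthogonal_def\<close>)
  then show ?thesis by (simp add: r_def orthogonal_def)
qed

lemma inner_proj_proj:
  fixes U :: "'a::euclidean_space set"
  assumes U: "subspace U"
  shows "inner (proj U Y) (proj U Z) = (\<Sum>c\<in>onb U. inner Y c * inner Z c)"
proof -
  have "proj U Z = (\<Sum>c\<in>onb U. inner (proj U Z) (id c) *\<^sub>R id c)"
    by (rule orthonormal_expansion[OF finite_onb[OF U] orthonormal_onb[OF U]])
      (simp add: U proj_in span_onb)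
  then have "inner (proj U Y) (proj U Z) = inner (proj U Y) (\<Sum>c\<in>onb U. inner (proj U Z) c *\<^sub>R c)"
    by (simp only: id_apply)
  also have "\<dots> = (\<Sum>c\<in>onb U. inner (proj U Y) c * inner (proj U Z) c)"
    by (simp add: inner_sum_right mult.commute)
  also have "\<dots> = (\<Sum>c\<in>onb U. inner Y c * inner Z c)"
    using proj_inner[OF U] onb_subset[OF U] by (intro sum.cong) auto
  finally show ?thesis .
qed

lemma norm_proj_squared:
  fixes U :: "'a::euclidean_space set"
  assumes "subspace U"
  shows "(norm (proj U v))\<^sup>2 = (\<Sum>c\<in>onb U. (inner v c)\<^sup>2)"
  using inner_proj_proj[OF assms, of v v] by (simp add: dot_square_norm power2_eq_square)

definition weighted_inner :: "'i set \<Rightarrow> ('i \<Rightarrow> 'a::real_inner) \<Rightarrow> ('i \<Rightarrow> real) \<Rightarrow> 'a \<Rightarrow> 'a \<Rightarrow> real" where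
  "weighted_inner I e w u v = (\<Sum>p\<in>I. w p * inner u (e p) * inner v (e p))"

lemma weighted_inner_commute: "weighted_inner I e w u v = weighted_inner I e w v u"
  unfolding weighted_inner_def by (simp add: ac_simps)

lemma bilinear_weighted_inner: "bilinear (weighted_inner I e w)"
  unfolding bilinear_def weighted_inner_def
  by (auto intro!: linearI simp: inner_add_left algebra_simps sum.distrib sum_distrib_left)

lemma weighted_inner_basis:
  assumes "finite I" "orthonormal_family I e" "q \<in> I"
  shows "weighted_inner I e w u (e q) = w q * inner u (e q)"
proof -
  have "weighted_inner I e w u (e q) = (\<Sum>p\<in>I. if p = q then w q * inner u (e q) else 0)"
    unfolding weighted_inner_def
    by (rule sum.cong) (use assms in \<open>auto simp: orthonormal_family_def inner_commute\<close>)
  then show ?thesis using assms by simp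
qed

lemma weighted_inner_unit_weights:
  fixes e :: "'i \<Rightarrow> 'a::euclidean_space"
  assumes "finite I" "orthonormal_family I e" "u \<in> span (e ` I)"
  shows "weighted_inner I e (\<lambda>_. 1) v u = inner v u"
proof -
  have "inner v u = inner v (\<Sum>p\<in>I. inner u (e p) *\<^sub>R e p)"
    using orthonormal_expansion[OF assms] by simp
  then show ?thesis by (simp add: weighted_inner_def inner_sum_right mult.commute)
qed

lemma weighted_inner_sum_right:
  "weighted_inner I e w u (\<Sum>b\<in>B. f b *\<^sub>R b) = (\<Sum>b\<in>B. f b * weighted_inner I e w u b)"
  unfolding weighted_inner_def
  by (simp add: inner_sum_left sum_distrib_left algebra_simps sum.swap[of _ B])

lemma weighted_parseval:
  assumes B: "finite B" "orthonormal_on (weighted_inner I e w) B" and u: "u \<in> span B"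
  shows "weighted_inner I e w u v = (\<Sum>b\<in>B. weighted_inner I e w b u * weighted_inner I e w b v)"
proof -
  let ?G = "weighted_inner I e w"
  obtain \<alpha> where u_def: "u = (\<Sum>b\<in>B. \<alpha> b *\<^sub>R b)"
    using u span_finite[OF B(1)] by auto
  have "?G b' u = \<alpha> b'" if "b' \<in> B" for b'
  proof -
    have "?G b' u = (\<Sum>b\<in>B. if b = b' then \<alpha> b' else 0)"
      unfolding u_def weighted_inner_sum_right
      by (rule sum.cong) (use B that in \<open>auto simp: orthonormal_on_def\<close>)
    then show ?thesis using B that by simp
  qed
  moreover have "?G u v = (\<Sum>b\<in>B. \<alpha> b * ?G b v)"
    by (subst weighted_inner_commute) (simp add: u_def weighted_inner_sum_right weighted_inner_commute)
  ultimately show ?thesis by simp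
qed

lemma weighted_onb_coordinates:
  assumes I: "finite I" "orthonormal_family I e" and w: "\<forall>p\<in>I. w p > 0"
    and B: "finite B" "span B = span (e ` I)" "orthonormal_on (weighted_inner I e w) B"
    and p: "p \<in> I" and q: "q \<in> I"
  shows "(\<Sum>b\<in>B. inner b (e p) * inner b (e q)) = (if p = q then 1 / w p else 0)"
proof -
  let ?G = "weighted_inner I e w"
  have dual: "inner b (e r) = ?G b ((1 / w r) *\<^sub>R e r)" if "r \<in> I" for b r
  proof -
    have "w r > 0" using w that by blast
    then show ?thesis
      using weighted_inner_basis[OF I that] by (simp add: bilinear_rmul[OF bilinear_weighted_inner])
  qed
  have "(\<Sum>b\<in>B. inner b (e p) * inner b (e q)) =
        (\<Sum>b\<in>B. ?G b ((1 / w p) *\<^sub>R e p) * ?G b ((1 / w q) *\<^sub>R e q))"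
    using dual p q by simp
  also have "\<dots> = ?G ((1 / w p) *\<^sub>R e p) ((1 / w q) *\<^sub>R e q)"
    using p B by (intro weighted_parseval[symmetric]) (auto intro: span_scale span_base)
  also have "\<dots> = (if p = q then 1 / w p else 0)"
    using I w p q
    by (simp add: bilinear_rmul[OF bilinear_weighted_inner] weighted_inner_basis orthonormal_family_def)
  finally show ?thesis .
qed

lemma trace_weighted_onb:
  fixes e :: "'i \<Rightarrow> 'a::euclidean_space" and \<phi> :: "'a \<Rightarrow> 'a \<Rightarrow> real"
  assumes I: "finite I" "orthonormal_family I e" and w: "\<forall>p\<in>I. w p > 0"
    and B: "finite B" "span B = span (e ` I)" "orthonormal_on (weighted_inner I e w) B"
    and \<phi>: "bilinear \<phi>"
  shows "(\<Sum>b\<in>B. \<phi> b b) = (\<Sum>p\<in>I. \<phi> (e p) (e p) / w p)"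
proof -
  have expand: "\<phi> b b = (\<Sum>p\<in>I. \<Sum>q\<in>I. inner b (e p) * inner b (e q) * \<phi> (e p) (e q))"
    if "b \<in> B" for b
  proof -
    have "b \<in> span (e ` I)" using that B span_base by blast
    then have "\<phi> b b = \<phi> (\<Sum>p\<in>I. inner b (e p) *\<^sub>R e p) (\<Sum>q\<in>I. inner b (e q) *\<^sub>R e q)"
      using orthonormal_expansion[OF I] by metis
    then show ?thesis
      by (simp add: bilinear_sum[OF \<phi>] sum.cartesian_product bilinear_lmul[OF \<phi>] bilinear_rmul[OF \<phi>]
          ac_simps)
  qed
  have "(\<Sum>b\<in>B. \<phi> b b) = (\<Sum>p\<in>I. \<Sum>q\<in>I. (\<Sum>b\<in>B. inner b (e p) * inner b (e q)) * \<phi> (e p) (e q))"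
    by (simp add: expand sum_distrib_right sum.swap[of _ B])
  also have "\<dots> = (\<Sum>p\<in>I. \<Sum>q\<in>I. if p = q then \<phi> (e p) (e p) / w p else 0)"
    by (intro sum.cong refl) (simp add: weighted_onb_coordinates[OF I w B])
  also have "\<dots> = (\<Sum>p\<in>I. \<phi> (e p) (e p) / w p)"
    using I(1) by simp
  finally show ?thesis .
qed

lemma weighted_onb_exists:
  fixes e :: "'i \<Rightarrow> 'a::euclidean_space"
  assumes I: "finite I" "orthonormal_family I e" and w: "\<forall>p\<in>I. w p > 0"
  shows "\<exists>B. finite B \<and> span B = span (e ` I) \<and> orthonormal_on (weighted_inner I e w) B"
proof -
  define f where "f p = (1 / sqrt (w p)) *\<^sub>R e p" for p
  have f_basis: "weighted_inner I e w (f p) (e q) = (if p = q then sqrt (w p) else 0)"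
    if "p \<in> I" "q \<in> I" for p q
    using I w that
    by (auto simp: f_def weighted_inner_basis bilinear_lmul[OF bilinear_weighted_inner]
        orthonormal_family_def real_div_sqrt)
  have "weighted_inner I e w (f p) (f q) = (if p = q then 1 else 0)" if "p \<in> I" "q \<in> I" for p q
  proof -
    have "w q > 0" using w that by blast
    then show ?thesis
      using f_basis[OF that] by (simp add: f_def bilinear_rmul[OF bilinear_weighted_inner])
  qed
  moreover have "inj_on f I"
  proof (rule inj_onI)
    fix p q assume pq: "p \<in> I" "q \<in> I" "f p = f q"
    show "p = q"
    proof (rule ccontr)
      assume "p \<noteq> q"
      then have "weighted_inner I e w (f q) (e p) = 0" using f_basis[OF pq(2,1)] by simp
      moreover have "weighted_inner I e w (f p) (e p) = sqrt (w p)" using f_basis[OF pq(1,1)] by simp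
      moreover have "w p > 0" using w pq by blast
      ultimately show False using pq(3) by simp
    qed
  qed
  ultimately have "orthonormal_on (weighted_inner I e w) (f ` I)"
    by (auto simp: orthonormal_on_def inj_on_eq_iff)
  moreover have "span (f ` I) = span (e ` I)"
    unfolding span_eq
  proof
    show "f ` I \<subseteq> span (e ` I)" by (auto simp: f_def intro: span_scale span_base)
  next
    show "e ` I \<subseteq> span (f ` I)"
    proof
      fix v assume "v \<in> e ` I"
      then obtain p where p: "p \<in> I" "v = e p" by blast
      moreover have "w p > 0" using w p by blast
      ultimately have "v = sqrt (w p) *\<^sub>R f p" by (simp add: f_def)
      then show "v \<in> span (f ` I)" using p by (simp add: span_scale span_base)
    qed
  qed
  ultimately show ?thesis using I(1) by blast
qed

lemma bilinear_compose_linear: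
  assumes "bilinear G" "linear f" "linear g"
  shows "bilinear (\<lambda>y z. G (f y) (g z))"
  using assms unfolding bilinear_def by (auto intro: linear_compose[unfolded o_def])

lemma bilinear_scaled_sum:
  fixes F :: "'q \<Rightarrow> 'a::real_vector \<Rightarrow> 'b::real_vector \<Rightarrow> real"
  assumes "\<And>q. q \<in> Q \<Longrightarrow> bilinear (F q)"
  shows "bilinear (\<lambda>y z. \<Sum>q\<in>Q. c q * F q y z)"
  unfolding bilinear_def
proof (intro conjI allI)
  show "linear (\<lambda>z. \<Sum>q\<in>Q. c q * F q y z)" for y
    by (rule linearI)
      (use assms in \<open>auto simp: bilinear_radd bilinear_rmul sum.distrib sum_distrib_left algebra_simps\<close>)
  show "linear (\<lambda>y. \<Sum>q\<in>Q. c q * F q y z)" for z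
    by (rule linearI)
      (use assms in \<open>auto simp: bilinear_ladd bilinear_lmul sum.distrib sum_distrib_left algebra_simps\<close>)
qed

section \<open>The scalar curvature of a diagonal metric in coordinates\<close>

text \<open>For the metric \<open>\<Sum>i\<in>J. x i \<cdot> Q|\<^bsub>m i\<^esub>\<close>, with \<open>\<kappa> i\<close> the trace of the Killing form over
  \<open>m i\<close> and \<open>b i j k = [ijk]\<close>, \<open>scal_coeff \<kappa> x b J\<close> is the usual formula for the scalar
  curvature, and \<open>cross_coeff x b J C\<close> is the sum over \<open>\<frak>g \<ominus> \<frak>k\<close> in \<open>Shat\<close>.\<close>

definition scal_coeff :: "(nat \<Rightarrow> real) \<Rightarrow> (nat \<Rightarrow> real) \<Rightarrow> (nat \<Rightarrow> nat \<Rightarrow> nat \<Rightarrow> real) \<Rightarrow> nat set \<Rightarrow> real"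
  where "scal_coeff \<kappa> x b J =
    - 1/2 * (\<Sum>i\<in>J. \<kappa> i / x i) - 1/4 * (\<Sum>i\<in>J. \<Sum>j\<in>J. \<Sum>k\<in>J. x k / (x i * x j) * b i j k)"

definition cross_coeff :: "(nat \<Rightarrow> real) \<Rightarrow> (nat \<Rightarrow> nat \<Rightarrow> nat \<Rightarrow> real) \<Rightarrow> nat set \<Rightarrow> nat set \<Rightarrow> real"
  where "cross_coeff x b J C = (\<Sum>i\<in>J. \<Sum>j\<in>C. \<Sum>k\<in>C. b i j k / x i)"

definition symmetric3 :: "(nat \<Rightarrow> nat \<Rightarrow> nat \<Rightarrow> real) \<Rightarrow> bool" where
  "symmetric3 b \<longleftrightarrow> (\<forall>i j k. b i j k = b j i k \<and> b i j k = b i k j)"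

lemma symmetric3_perms:
  assumes "symmetric3 b"
  shows "b i j k = b j i k" "b i j k = b i k j" "b i j k = b k i j" "b i j k = b j k i" "b i j k = b k j i"
  using assms unfolding symmetric3_def by metis+

lemma sum_rotate3: "(\<Sum>i\<in>A. \<Sum>j\<in>B. \<Sum>k\<in>C. f i j k) = (\<Sum>k\<in>C. \<Sum>i\<in>A. \<Sum>j\<in>B. f i j k :: real)"
proof -
  have "(\<Sum>i\<in>A. \<Sum>j\<in>B. \<Sum>k\<in>C. f i j k) = (\<Sum>i\<in>A. \<Sum>k\<in>C. \<Sum>j\<in>B. f i j k)"
    by (rule sum.cong[OF refl], rule sum.swap)
  also have "\<dots> = (\<Sum>k\<in>C. \<Sum>i\<in>A. \<Sum>j\<in>B. f i j k)" by (rule sum.swap)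
  finally show ?thesis .
qed

lemma sum_reverse3: "(\<Sum>i\<in>A. \<Sum>j\<in>B. \<Sum>k\<in>C. f i j k) = (\<Sum>k\<in>C. \<Sum>j\<in>B. \<Sum>i\<in>A. f i j k :: real)"
  unfolding sum_rotate3[of _ A] by (rule sum.cong[OF refl], rule sum.swap)

lemma sum_Sigma_pairs:
  "finite A \<Longrightarrow> (\<And>i. i \<in> A \<Longrightarrow> finite (E i)) \<Longrightarrow> sum H (Sigma A E) = (\<Sum>i\<in>A. \<Sum>a\<in>E i. H (i, a))"
  using sum.Sigma[of A E "\<lambda>i a. H (i, a)"] by simp

lemma sum_Sigma3:
  assumes "finite A" "finite B" "finite C" "\<And>i. i \<in> A \<union> B \<union> C \<Longrightarrow> finite (E i)"
  shows "(\<Sum>r\<in>Sigma A E. \<Sum>q\<in>Sigma B E. \<Sum>p\<in>Sigma C E. F (fst r) (fst q) (fst p) * G (snd r) (snd q) (snd p))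
       = (\<Sum>i\<in>A. \<Sum>j\<in>B. \<Sum>k\<in>C. F i j k * (\<Sum>a\<in>E i. \<Sum>b\<in>E j. \<Sum>c\<in>E k. G a b c :: real))"
proof -
  have "(\<Sum>r\<in>Sigma A E. \<Sum>q\<in>Sigma B E. \<Sum>p\<in>Sigma C E. F (fst r) (fst q) (fst p) * G (snd r) (snd q) (snd p))
      = (\<Sum>i\<in>A. \<Sum>a\<in>E i. \<Sum>j\<in>B. \<Sum>b\<in>E j. \<Sum>k\<in>C. \<Sum>c\<in>E k. F i j k * G a b c)"
    using assms by (simp add: sum_Sigma_pairs)
  also have "\<dots> = (\<Sum>i\<in>A. \<Sum>j\<in>B. \<Sum>a\<in>E i. \<Sum>b\<in>E j. \<Sum>k\<in>C. \<Sum>c\<in>E k. F i j k * G a b c)"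
    by (rule sum.cong[OF refl], rule sum.swap)
  also have "\<dots> = (\<Sum>i\<in>A. \<Sum>j\<in>B. \<Sum>k\<in>C. \<Sum>a\<in>E i. \<Sum>b\<in>E j. \<Sum>c\<in>E k. F i j k * G a b c)"
    by (rule sum.cong[OF refl], rule sum.cong[OF refl], rule sum_rotate3)
  also have "\<dots> = (\<Sum>i\<in>A. \<Sum>j\<in>B. \<Sum>k\<in>C. F i j k * (\<Sum>a\<in>E i. \<Sum>b\<in>E j. \<Sum>c\<in>E k. G a b c))"
    by (simp add: sum_distrib_left)
  finally show ?thesis .
qed

lemma sum3_union_disjoint:
  assumes "finite N" "finite L" "N \<inter> L = {}"
  shows "(\<Sum>i\<in>N \<union> L. \<Sum>j\<in>N \<union> L. \<Sum>k\<in>N \<union> L. f i j k) =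
      (\<Sum>i\<in>N. \<Sum>j\<in>N. \<Sum>k\<in>N. f i j k) + (\<Sum>i\<in>N. \<Sum>j\<in>N. \<Sum>k\<in>L. f i j k) +
      (\<Sum>i\<in>N. \<Sum>j\<in>L. \<Sum>k\<in>N. f i j k) + (\<Sum>i\<in>N. \<Sum>j\<in>L. \<Sum>k\<in>L. f i j k) +
      (\<Sum>i\<in>L. \<Sum>j\<in>N. \<Sum>k\<in>N. f i j k) + (\<Sum>i\<in>L. \<Sum>j\<in>N. \<Sum>k\<in>L. f i j k) +
      (\<Sum>i\<in>L. \<Sum>j\<in>L. \<Sum>k\<in>N. f i j k) + (\<Sum>i\<in>L. \<Sum>j\<in>L. \<Sum>k\<in>L. f i j k :: real)"
  using assms by (simp add: sum.union_disjoint sum.distrib)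

lemma scal_coeff_union:
  assumes fin: "finite N" "finite L" and disj: "N \<inter> L = {}" and b: "symmetric3 b"
    and vanish: "\<forall>i\<in>N. \<forall>j\<in>N. \<forall>k\<in>L. b i j k = 0"
  shows "scal_coeff \<kappa> x b (N \<union> L) = scal_coeff \<kappa> x b N + scal_coeff \<kappa> x b L
    - 1/4 * (\<Sum>i\<in>L. \<Sum>j\<in>L. \<Sum>k\<in>N. b i j k * (x k / (x i * x j) + 2 * x i / (x j * x k)))"
proof -
  define f where "f i j k = x k / (x i * x j) * b i j k" for i j k
  define A where "A = (\<Sum>i\<in>L. \<Sum>j\<in>L. \<Sum>k\<in>N. f i j k)"
  define B where "B = (\<Sum>i\<in>L. \<Sum>j\<in>L. \<Sum>k\<in>N. b i j k * (x i / (x j * x k)))"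
  have NNL: "(\<Sum>i\<in>N. \<Sum>j\<in>N. \<Sum>k\<in>L. f i j k) = 0"
    using vanish by (simp add: f_def)
  have "b i j k = 0" if "i \<in> N" "j \<in> L" "k \<in> N" for i j k
    using vanish that symmetric3_perms(2)[OF b, of i j k] by simp
  then have NLN: "(\<Sum>i\<in>N. \<Sum>j\<in>L. \<Sum>k\<in>N. f i j k) = 0"
    by (simp add: f_def)
  have "b i j k = 0" if "i \<in> L" "j \<in> N" "k \<in> N" for i j k
    using vanish that symmetric3_perms(4)[OF b, of i j k] by simp
  then have LNN: "(\<Sum>i\<in>L. \<Sum>j\<in>N. \<Sum>k\<in>N. f i j k) = 0"
    by (simp add: f_def)
  have NLL: "(\<Sum>i\<in>N. \<Sum>j\<in>L. \<Sum>k\<in>L. f i j k) = B"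
    unfolding sum_reverse3[of _ N] B_def f_def
    by (intro sum.cong refl) (simp add: symmetric3_perms(5)[OF b] ac_simps)
  have LNL: "(\<Sum>i\<in>L. \<Sum>j\<in>N. \<Sum>k\<in>L. f i j k) = B"
    unfolding sum_rotate3[of _ L] B_def f_def
    by (intro sum.cong refl) (simp add: symmetric3_perms(3)[OF b] ac_simps)
  have "(\<Sum>i\<in>N \<union> L. \<Sum>j\<in>N \<union> L. \<Sum>k\<in>N \<union> L. f i j k) =
      (\<Sum>i\<in>N. \<Sum>j\<in>N. \<Sum>k\<in>N. f i j k) + (\<Sum>i\<in>L. \<Sum>j\<in>L. \<Sum>k\<in>L. f i j k) + A + 2 * B"
    unfolding sum3_union_disjoint[OF fin disj] NNL NLN LNN NLL LNL A_def by simp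
  moreover have "(\<Sum>i\<in>L. \<Sum>j\<in>L. \<Sum>k\<in>N. b i j k * (x k / (x i * x j) + 2 * x i / (x j * x k))) = A + 2 * B"
    unfolding A_def B_def f_def by (simp add: sum.distrib sum_distrib_left algebra_simps)
  moreover have "(\<Sum>i\<in>N \<union> L. \<kappa> i / x i) = (\<Sum>i\<in>N. \<kappa> i / x i) + (\<Sum>i\<in>L. \<kappa> i / x i)"
    using fin disj by (simp add: sum.union_disjoint)
  ultimately show ?thesis
    unfolding scal_coeff_def f_def by (simp add: algebra_simps)
qed

lemma cross_coeff_union:
  assumes "finite L" "finite C" "L \<inter> C = {}" "symmetric3 b"
    and vanish: "\<forall>i\<in>N. \<forall>j\<in>L. \<forall>k\<in>C. b i j k = 0"
  shows "cross_coeff x b N (L \<union> C) = cross_coeff x b N L + cross_coeff x b N C"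
proof -
  have "b i j k = 0" if "i \<in> N" "j \<in> C" "k \<in> L" for i j k
    using vanish that symmetric3_perms(2)[OF \<open>symmetric3 b\<close>] by metis
  then show ?thesis
    using assms unfolding cross_coeff_def
    by (simp add: sum.union_disjoint sum.distrib)
qed

lemma cross_coeff_le:
  assumes b: "symmetric3 b" "\<And>i j k. b i j k \<ge> 0" and x: "\<forall>i\<in>N \<union> L. x i > 0"
  shows "cross_coeff x b N L \<le> (\<Sum>i\<in>L. \<Sum>j\<in>L. \<Sum>k\<in>N. b i j k * (x i / (x j * x k)))"
    (is "_ \<le> ?B")
proof -
  have "2 * cross_coeff x b N L = (\<Sum>i\<in>L. \<Sum>j\<in>L. \<Sum>k\<in>N. 2 * (b i j k / x k))"
    unfolding cross_coeff_def sum_reverse3[of _ N] sum_distrib_left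
    by (intro sum.cong refl) (simp add: symmetric3_perms(5)[OF b(1)])
  also have "\<dots> \<le> (\<Sum>i\<in>L. \<Sum>j\<in>L. \<Sum>k\<in>N. b i j k * (x i / (x j * x k)) + b i j k * (x j / (x i * x k)))"
  proof (intro sum_mono)
    fix i j k assume "i \<in> L" "j \<in> L" "k \<in> N"
    then have pos: "x i > 0" "x j > 0" "x k > 0" using x by auto
    have "2 * (x i * x j) \<le> x i * x i + x j * x j"
      using sum_squares_bound[of "x i" "x j"] by (simp add: power2_eq_square)
    then have "2 \<le> x i / x j + x j / x i" using pos by (simp add: field_simps)
    then have "b i j k / x k * 2 \<le> b i j k / x k * (x i / x j + x j / x i)"
      using b(2) pos by (intro mult_left_mono) auto
    then show "2 * (b i j k / x k) \<le> b i j k * (x i / (x j * x k)) + b i j k * (x j / (x i * x k))"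
      using pos by (simp add: field_simps)
  qed
  also have "\<dots> = ?B + (\<Sum>i\<in>L. \<Sum>j\<in>L. \<Sum>k\<in>N. b i j k * (x j / (x i * x k)))"
    by (simp only: sum.distrib)
  also have "(\<Sum>i\<in>L. \<Sum>j\<in>L. \<Sum>k\<in>N. b i j k * (x j / (x i * x k))) = ?B"
    by (subst sum.swap) (simp add: symmetric3_perms(1)[OF b(1)])
  finally show ?thesis by simp
qed

lemma scal_cross_coeff_le:
  assumes fin: "finite N" "finite L" "finite C"
    and disj: "N \<inter> L = {}" "L \<inter> C = {}" "N \<inter> C = {}"
    and b: "symmetric3 b" "\<And>i j k. b i j k \<ge> 0" and x: "\<forall>i\<in>N \<union> L. x i > 0"
    and vanish: "\<forall>i\<in>N. \<forall>j\<in>N. \<forall>k\<in>L. b i j k = 0" "\<forall>i\<in>N. \<forall>j\<in>L. \<forall>k\<in>C. b i j k = 0"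
  shows "scal_coeff \<kappa> x b (N \<union> L) - 1/2 * cross_coeff x b (N \<union> L) C
    \<le> (scal_coeff \<kappa> x b N - 1/2 * cross_coeff x b N (L \<union> C)) + scal_coeff \<kappa> x b L"
proof -
  let ?A = "\<Sum>i\<in>L. \<Sum>j\<in>L. \<Sum>k\<in>N. x k / (x i * x j) * b i j k"
  let ?B = "\<Sum>i\<in>L. \<Sum>j\<in>L. \<Sum>k\<in>N. b i j k * (x i / (x j * x k))"
  have "(\<Sum>i\<in>L. \<Sum>j\<in>L. \<Sum>k\<in>N. b i j k * (x k / (x i * x j) + 2 * x i / (x j * x k))) = ?A + 2 * ?B"
    by (simp add: sum.distrib sum_distrib_left algebra_simps)
  moreover have "?A \<ge> 0"
    using b(2) x by (intro sum_nonneg mult_nonneg_nonneg divide_nonneg_pos) (auto intro!: less_imp_le)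
  moreover have "cross_coeff x b L C \<ge> 0"
    unfolding cross_coeff_def using b(2) x by (intro sum_nonneg divide_nonneg_pos) auto
  moreover have "cross_coeff x b (N \<union> L) C = cross_coeff x b N C + cross_coeff x b L C"
    unfolding cross_coeff_def using fin disj by (simp add: sum.union_disjoint)
  ultimately show ?thesis
    using scal_coeff_union[OF fin(1,2) disj(1) b(1) vanish(1), of \<kappa> x]
      cross_coeff_union[OF fin(2,3) disj(2) b(1) vanish(2), of x] cross_coeff_le[OF b x]
    by linarith
qed

lemma h_inv_image:
  assumes U: "h_inv br h U" and f: "\<And>X v. X \<in> h \<Longrightarrow> f (br X v) = br X (f v)"
  shows "h_inv br h (f ` U)"
  unfolding h_inv_def
proof (intro ballI)
  fix X Y assume "X \<in> h" "Y \<in> f ` U"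
  then obtain y where "y \<in> U" "Y = f y" by blast
  then show "br X Y \<in> f ` U"
    using U f[OF \<open>X \<in> h\<close>, of y] \<open>X \<in> h\<close> unfolding h_inv_def by (metis image_eqI)
qed

lemma inj_on_h_irreducible:
  assumes U: "h_irreducible br h U" and br: "bilinear br" and f: "linear f"
    and equivariant: "\<And>X v. X \<in> h \<Longrightarrow> f (br X v) = br X (f v)"
    and v: "v \<in> U" "f v \<noteq> 0"
  shows "inj_on f U"
proof -
  define Z where "Z = {u \<in> U. f u = 0}"
  have U_sub: "subspace U" using U by (simp add: h_irreducible_def)
  have "subspace Z"
    unfolding Z_def using U_sub f by (auto simp: subspace_def linear_add linear_scale linear_0)
  moreover have "h_inv br h Z"
    using U equivariant bilinear_rzero[OF br] by (auto simp: Z_def h_irreducible_def h_inv_def)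
  moreover have "Z \<subseteq> U" "Z \<noteq> U" using v by (auto simp: Z_def)
  ultimately have "Z = {0}" using U unfolding h_irreducible_def by blast
  then show ?thesis
    unfolding linear_inj_on_iff_eq_0[OF f U_sub] by (auto simp: Z_def)
qed

lemma h_equiv_images:
  assumes U: "subspace U" "h_inv br h U"
    and p: "linear p" "inj_on p U" "\<And>X v. X \<in> h \<Longrightarrow> p (br X v) = br X (p v)"
    and q: "linear q" "inj_on q U" "\<And>X v. X \<in> h \<Longrightarrow> q (br X v) = br X (q v)"
  shows "h_equiv br h (p ` U) (q ` U)"
proof -
  have "span U = U" using U(1) by (simp add: span_eq_iff)
  then obtain g where g: "linear g" "\<And>u. u \<in> U \<Longrightarrow> g (p u) = u"
    using linear_inj_on_left_inverse[OF p(1)] p(2) by metis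
  define T where "T = q \<circ> g"
  have T: "T (p u) = q u" if "u \<in> U" for u using g(2)[OF that] by (simp add: T_def)
  have "linear T" unfolding T_def using g(1) q(1) by (rule linear_compose)
  moreover have "bij_betw T (p ` U) (q ` U)"
  proof (rule bij_betw_imageI)
    show "inj_on T (p ` U)"
      using T q(2) by (auto intro!: inj_onI dest: inj_onD)
    show "T ` p ` U = q ` U" using T by (auto simp: image_image)
  qed
  moreover have "T (br X Y) = br X (T Y)" if "X \<in> h" "Y \<in> p ` U" for X Y
  proof -
    obtain y where y: "y \<in> U" "Y = p y" using \<open>Y \<in> p ` U\<close> by blast
    have "br X y \<in> U" using U(2) that(1) y(1) by (simp add: h_inv_def)
    then show ?thesis using y T p(3)[OF that(1), symmetric] q(3)[OF that(1)] by simp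
  qed
  ultimately show ?thesis unfolding h_equiv_def by blast
qed

section \<open>The isotropy decomposition\<close>

locale isotropy_decomposition =
  fixes br :: "'a::euclidean_space \<Rightarrow> 'a \<Rightarrow> 'a" and h :: "'a set"
    and s :: nat and m :: "nat \<Rightarrow> 'a set"
  assumes lie: "lie_algebra br" and Q_invariant: "Q_ad_invariant br"
    and hypothesis_H: "hypH br h" and decomposition: "isotropy_decomp br h s m"
begin

lemma bilinear_br: "bilinear br"
  using lie unfolding lie_algebra_def by blast

lemma br_antisym: "br y x = - br x y"
proof -
  have "br (x + y) (x + y) = 0" "br x x = 0" "br y y = 0"
    using lie unfolding lie_algebra_def by blast+
  then show ?thesis
    by (simp add: bilinear_ladd[OF bilinear_br] bilinear_radd[OF bilinear_br] eq_neg_iff_add_eq_0 add.commute)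
qed

lemma inner_br_skew: "inner (br x y) z = - inner y (br x z)"
  using Q_invariant unfolding Q_ad_invariant_def by (simp add: eq_neg_iff_add_eq_0)

lemma
  assumes "i \<in> {1..s}"
  shows m_irreducible: "h_irreducible br h (m i)"
    and m_subspace: "subspace (m i)"
    and m_h_inv: "h_inv br h (m i)"
  using assms decomposition unfolding isotropy_decomp_def h_irreducible_def by blast+

lemma m_orthogonal:
  "i \<in> {1..s} \<Longrightarrow> j \<in> {1..s} \<Longrightarrow> i \<noteq> j \<Longrightarrow> u \<in> m i \<Longrightarrow> v \<in> m j \<Longrightarrow> inner u v = 0"
  using decomposition unfolding isotropy_decomp_def by blast

lemma m_nonzero:
  assumes "i \<in> {1..s}" obtains v where "v \<in> m i" "v \<noteq> 0"
  using m_irreducible[OF assms] subspace_0[OF m_subspace[OF assms]]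
  unfolding h_irreducible_def by blast

lemma span_m: "span (\<Union>i\<in>{1..s}. m i) = ocomp UNIV h"
  using decomposition unfolding isotropy_decomp_def by blast

lemma m_orthogonal_h:
  assumes "i \<in> {1..s}" shows "m i \<subseteq> ocomp UNIV h"
proof
  fix v assume "v \<in> m i"
  then have "v \<in> span (\<Union>i\<in>{1..s}. m i)" using assms by (intro span_base) blast
  then show "v \<in> ocomp UNIV h" using span_m by simp
qed

lemma hypH_inequivalent:
  assumes "lie_subalg br S" "h \<subset> S" "subspace U" "subspace V" "U \<noteq> {0}" "V \<noteq> {0}"
    "U \<subseteq> ocomp S h" "V \<subseteq> ocomp UNIV S" "h_inv br h U" "h_inv br h V"
  shows "\<not> h_equiv br h U V"
proof -
  have "\<forall>U V. subspace U \<and> subspace V \<and> U \<noteq> {0} \<and> V \<noteq> {0} \<and>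
      U \<subseteq> ocomp S h \<and> V \<subseteq> ocomp UNIV S \<and> h_inv br h U \<and> h_inv br h V \<longrightarrow> \<not> h_equiv br h U V"
    using hypothesis_H assms(1,2) unfolding hypH_def by blast
  then show ?thesis using assms(3-) by blast
qed

lemma proj_subalgebra_equivariant:
  assumes S: "lie_subalg br S" "h \<subseteq> S" and X: "X \<in> h"
  shows "proj S (br X v) = br X (proj S v)"
proof (rule proj_unique)
  have S_sub: "subspace S" and S_br: "\<And>u w. u \<in> S \<Longrightarrow> w \<in> S \<Longrightarrow> br u w \<in> S"
    using S unfolding lie_subalg_def by blast+
  then show "subspace S" "br X (proj S v) \<in> S" using X S(2) proj_in by blast+
  have "inner (br X v - br X (proj S v)) w = 0" if "w \<in> S" for w
  proof -
    have "inner (br X v - br X (proj S v)) w = - inner (v - proj S v) (br X w)"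
      unfolding bilinear_rsub[OF bilinear_br, symmetric] by (rule inner_br_skew)
    also have "\<dots> = 0" using proj_orth[OF S_sub S_br[OF _ that]] X S(2) by auto
    finally show ?thesis .
  qed
  then show "\<forall>w\<in>S. inner (br X v - br X (proj S v)) w = 0" by blast
qed

text \<open>The first part of Hypothesis (H) forces every \<open>m i\<close> to lie in, or be orthogonal to, every
  intermediate subalgebra: otherwise the projections of \<open>m i\<close> to \<open>S\<close> and to its complement would
  be equivalent by Schur's lemma.\<close>

lemma m_subset_or_orthogonal:
  assumes S: "lie_subalg br S" "h \<subset> S" and i: "i \<in> {1..s}"
  shows "m i \<subseteq> S \<or> m i \<subseteq> ocomp UNIV S"
proof (rule ccontr)
  assume "\<not> ?thesis"
  then obtain v w z where v: "v \<in> m i" "v \<notin> S" and w: "w \<in> m i" "z \<in> S" "inner w z \<noteq> 0"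
    unfolding ocomp_def by auto
  have S_sub: "subspace S" using S(1) unfolding lie_subalg_def by blast
  define q where "q u = u - proj S u" for u
  have p_equivariant: "proj S (br X u) = br X (proj S u)" if "X \<in> h" for X u
    using proj_subalgebra_equivariant S that by blast
  have q_equivariant: "q (br X u) = br X (q u)" if "X \<in> h" for X u
    using p_equivariant[OF that] by (simp add: q_def bilinear_rsub[OF bilinear_br])
  have p_linear: "linear (proj S)" by (rule linear_proj[OF S_sub])
  have q_linear: "linear q"
    unfolding q_def using p_linear by (auto intro!: linearI simp: linear_add linear_scale algebra_simps)
  have "proj S w \<noteq> 0" using proj_inner[OF S_sub w(2), of w] w(3) by auto
  then have p_inj: "inj_on (proj S) (m i)"
    using inj_on_h_irreducible[OF m_irreducible[OF i] bilinear_br p_linear p_equivariant w(1)] by blast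
  have "q v \<noteq> 0" using v(2) proj_in[OF S_sub, of v] by (auto simp: q_def)
  then have q_inj: "inj_on q (m i)"
    using inj_on_h_irreducible[OF m_irreducible[OF i] bilinear_br q_linear q_equivariant v(1)] by blast
  have "h_equiv br h (proj S ` m i) (q ` m i)"
    using h_equiv_images[OF m_subspace[OF i] m_h_inv[OF i]] p_linear p_inj p_equivariant
      q_linear q_inj q_equivariant by blast
  moreover have "proj S ` m i \<subseteq> ocomp S h"
    using m_orthogonal_h[OF i] S(2) proj_in[OF S_sub] proj_inner[OF S_sub] by (fastforce simp: ocomp_def)
  moreover have "q ` m i \<subseteq> ocomp UNIV S"
    using proj_orth[OF S_sub] by (auto simp: ocomp_def q_def)
  moreover have "proj S ` m i \<noteq> {0}" "q ` m i \<noteq> {0}"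
    using w(1) \<open>proj S w \<noteq> 0\<close> v(1) \<open>q v \<noteq> 0\<close> by blast+
  moreover have "subspace (proj S ` m i)" "subspace (q ` m i)"
    using linear_subspace_image[OF p_linear m_subspace[OF i]] linear_subspace_image[OF q_linear m_subspace[OF i]] .
  moreover have "h_inv br h (proj S ` m i)" "h_inv br h (q ` m i)"
    using h_inv_image[OF m_h_inv[OF i]] p_equivariant q_equivariant by blast+
  ultimately show False using hypH_inequivalent[OF S] by blast
qed

abbreviation mbasis :: "nat \<Rightarrow> 'a set" where "mbasis i \<equiv> onb (m i)"

definition msum :: "nat set \<Rightarrow> 'a set" where "msum J = span (\<Union>i\<in>J. m i)"

lemma
  assumes "J \<subseteq> {1..s}"
  shows finite_Sigma_mbasis: "finite (Sigma J mbasis)"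
    and orthonormal_Sigma_mbasis: "orthonormal_family (Sigma J mbasis) snd"
    and span_Sigma_mbasis: "span (snd ` Sigma J mbasis) = msum J"
proof -
  have J: "i \<in> {1..s}" if "i \<in> J" for i using assms that by blast
  show "finite (Sigma J mbasis)"
    using finite_subset[OF assms finite_atLeastAtMost] finite_onb[OF m_subspace[OF J]]
    by (intro finite_SigmaI) auto
  show "orthonormal_family (Sigma J mbasis) snd"
    unfolding orthonormal_family_def
  proof (intro ballI)
    fix p q assume "p \<in> Sigma J mbasis" "q \<in> Sigma J mbasis"
    then obtain i a j b where p: "p = (i, a)" "i \<in> J" "a \<in> mbasis i"
      and q: "q = (j, b)" "j \<in> J" "b \<in> mbasis j" by blast
    show "inner (snd p) (snd q) = (if p = q then 1 else 0)"
    proof (cases "i = j")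
      case True
      then show ?thesis
        using p q orthonormal_onb[OF m_subspace[OF J[OF p(2)]]] by (auto simp: orthonormal_family_def)
    next
      case False
      have "a \<in> m i" "b \<in> m j"
        using p(3) q(3) onb_subset[OF m_subspace[OF J[OF p(2)]]] onb_subset[OF m_subspace[OF J[OF q(2)]]]
        by blast+
      then show ?thesis using p q False m_orthogonal[OF J[OF p(2)] J[OF q(2)] False] by simp
    qed
  qed
  have "(\<Union>i\<in>J. mbasis i) \<subseteq> span (\<Union>i\<in>J. m i)"
    using onb_subset[OF m_subspace[OF J]] by (blast intro: span_base)
  moreover have "(\<Union>i\<in>J. m i) \<subseteq> span (\<Union>i\<in>J. mbasis i)"
  proof (intro UN_least)
    fix i assume "i \<in> J"
    then have "span (mbasis i) \<subseteq> span (\<Union>i\<in>J. mbasis i)" by (intro span_mono) blast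
    then show "m i \<subseteq> span (\<Union>i\<in>J. mbasis i)" using span_onb[OF m_subspace[OF J[OF \<open>i \<in> J\<close>]]] by simp
  qed
  moreover have "snd ` Sigma J mbasis = (\<Union>i\<in>J. mbasis i)" by force
  ultimately show "span (snd ` Sigma J mbasis) = msum J"
    unfolding msum_def by (simp add: span_eq)
qed

lemma msum_expansion:
  assumes "J \<subseteq> {1..s}" "v \<in> msum J"
  shows "v = (\<Sum>p\<in>Sigma J mbasis. inner v (snd p) *\<^sub>R snd p)"
  by (rule orthonormal_expansion[OF finite_Sigma_mbasis[OF assms(1)] orthonormal_Sigma_mbasis[OF assms(1)]])
    (simp only: span_Sigma_mbasis[OF assms(1)] assms(2))

lemma msum_orthogonal:
  assumes "i \<in> {1..s} - J" "v \<in> msum J" "c \<in> m i" "J \<subseteq> {1..s}"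
  shows "inner v c = 0"
proof -
  have perp: "orthogonal c y" if y: "y \<in> (\<Union>j\<in>J. m j)" for y
  proof -
    obtain j where "j \<in> J" "y \<in> m j" using y by blast
    moreover have "j \<in> {1..s}" "i \<in> {1..s}" "i \<noteq> j" using \<open>j \<in> J\<close> assms(1,4) by auto
    ultimately show ?thesis using m_orthogonal[of i j c y] assms(3) unfolding orthogonal_def by blast
  qed
  have "orthogonal c v" by (rule orthogonal_to_span[OF assms(2)[unfolded msum_def] perp])
  then show ?thesis by (simp add: orthogonal_def inner_commute)
qed

lemma msum_restrict:
  assumes J: "J \<subseteq> {1..s}" "J' \<subseteq> J" and v: "v \<in> msum J"
    and perp: "\<And>i c. i \<in> J - J' \<Longrightarrow> c \<in> m i \<Longrightarrow> inner v c = 0"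
  shows "v \<in> msum J'"
proof -
  have "v = (\<Sum>p\<in>Sigma J mbasis. inner v (snd p) *\<^sub>R snd p)" by (rule msum_expansion[OF J(1) v])
  also have "\<dots> = (\<Sum>p\<in>Sigma J' mbasis. inner v (snd p) *\<^sub>R snd p)"
  proof (rule sum.mono_neutral_right)
    show "finite (Sigma J mbasis)" by (rule finite_Sigma_mbasis[OF J(1)])
    show "Sigma J' mbasis \<subseteq> Sigma J mbasis" using J(2) by blast
    show "\<forall>p\<in>Sigma J mbasis - Sigma J' mbasis. inner v (snd p) *\<^sub>R snd p = 0"
    proof
      fix p assume "p \<in> Sigma J mbasis - Sigma J' mbasis"
      then obtain i c where p: "p = (i, c)" "i \<in> J - J'" "c \<in> mbasis i" by blast
      then have "c \<in> m i" using J(1) onb_subset[OF m_subspace] by blast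
      then show "inner v (snd p) *\<^sub>R snd p = 0" using perp p by simp
    qed
  qed
  also have "\<dots> \<in> span (snd ` Sigma J' mbasis)"
    by (intro span_sum span_scale span_base) auto
  finally show ?thesis
    using J by (simp only: span_Sigma_mbasis[of J'] subset_trans)
qed

lemma msum_subset: "subspace V \<Longrightarrow> (\<And>i. i \<in> J \<Longrightarrow> m i \<subseteq> V) \<Longrightarrow> msum J \<subseteq> V"
  unfolding msum_def by (rule span_minimal) auto

lemma msum_all: "msum {1..s} = ocomp UNIV h"
  using span_m by (simp add: msum_def)

lemma msum_restrict_all:
  assumes "v \<in> ocomp UNIV h" "J \<subseteq> {1..s}"
    and "\<And>i c. i \<in> {1..s} \<Longrightarrow> i \<notin> J \<Longrightarrow> c \<in> m i \<Longrightarrow> inner v c = 0"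
  shows "v \<in> msum J"
proof (rule msum_restrict[of "{1..s}"])
  show "v \<in> msum {1..s}" using assms(1) msum_all by simp
qed (use assms in auto)

text \<open>Under Hypothesis (H) every intermediate subalgebra is a sum of modules \<open>m i\<close>, so that
  \<open>Jidx\<close> is well defined.\<close>

lemma Jidx_subalgebra:
  assumes S: "lie_subalg br S" "h \<subset> S"
  shows "Jidx s m h S = {i \<in> {1..s}. m i \<subseteq> S}"
    and "ocomp S h = msum (Jidx s m h S)"
proof -
  let ?J = "{i \<in> {1..s}. m i \<subseteq> S}"
  have S_sub: "subspace S" using S(1) unfolding lie_subalg_def by blast
  have sum_J: "msum ?J = ocomp S h"
  proof
    show "msum ?J \<subseteq> ocomp S h"
      using m_orthogonal_h subspace_ocomp[OF S_sub]
      by (intro msum_subset) (auto simp: ocomp_def)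
    show "ocomp S h \<subseteq> msum ?J"
    proof
      fix v assume v: "v \<in> ocomp S h"
      have "inner v c = 0" if "i \<in> {1..s}" "\<not> m i \<subseteq> S" "c \<in> m i" for i c
        using m_subset_or_orthogonal[OF S that(1)] that v by (auto simp: ocomp_def inner_commute)
      then show "v \<in> msum ?J" using v by (intro msum_restrict_all) (auto simp: ocomp_def)
    qed
  qed
  have unique: "J = ?J" if J: "J \<subseteq> {1..s}" "msum J = ocomp S h" for J
  proof
    show "J \<subseteq> ?J"
      using J span_base unfolding msum_def ocomp_def by blast
    show "?J \<subseteq> J"
    proof
      fix i assume i: "i \<in> ?J"
      obtain c where c: "c \<in> m i" "c \<noteq> 0" using m_nonzero i by blast
      have "c \<in> msum J" using sum_J i c(1) J(2) by (auto intro: span_base simp: msum_def)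
      then show "i \<in> J" using msum_orthogonal[of i J c c] i c J(1) by auto
    qed
  qed
  show "Jidx s m h S = ?J"
    unfolding Jidx_def by (rule the_equality) (use sum_J unique in \<open>auto simp: msum_def\<close>)
  then show "ocomp S h = msum (Jidx s m h S)" using sum_J by simp
qed

lemma ocomp_UNIV_subalgebra:
  assumes S: "lie_subalg br S" "h \<subset> S"
  shows "ocomp UNIV S = msum ({1..s} - Jidx s m h S)"
proof
  show "ocomp UNIV S \<subseteq> msum ({1..s} - Jidx s m h S)"
  proof
    fix v assume v: "v \<in> ocomp UNIV S"
    then show "v \<in> msum ({1..s} - Jidx s m h S)"
      using S(2) Jidx_subalgebra(1)[OF S]
      by (intro msum_restrict_all) (auto simp: ocomp_def inner_commute)
  qed
  show "msum ({1..s} - Jidx s m h S) \<subseteq> ocomp UNIV S"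
    using m_subset_or_orthogonal[OF S] Jidx_subalgebra(1)[OF S]
    by (intro msum_subset subspace_ocomp subspace_UNIV) auto
qed

lemma ocomp_subalgebras:
  assumes K: "lie_subalg br K" and K': "lie_subalg br K'" "h \<subset> K'" and "K' \<subseteq> K"
  shows "ocomp K K' = msum (Jidx s m h K - Jidx s m h K')"
proof
  have hK: "h \<subset> K" using assms by blast
  have K_sub: "subspace K" using K unfolding lie_subalg_def by blast
  show "ocomp K K' \<subseteq> msum (Jidx s m h K - Jidx s m h K')"
  proof
    fix v assume v: "v \<in> ocomp K K'"
    then have "v \<in> msum (Jidx s m h K)"
      using Jidx_subalgebra(2)[OF K hK] K'(2) by (auto simp: ocomp_def)
    then show "v \<in> msum (Jidx s m h K - Jidx s m h K')"
      by (rule msum_restrict[rotated 2])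
        (use v Jidx_subalgebra(1)[OF K'] Jidx_subalgebra(1)[OF K hK] in \<open>auto simp: ocomp_def inner_commute\<close>)
  qed
  show "msum (Jidx s m h K - Jidx s m h K') \<subseteq> ocomp K K'"
    using m_subset_or_orthogonal[OF K'] Jidx_subalgebra(1)[OF K'] Jidx_subalgebra(1)[OF K hK]
    by (intro msum_subset subspace_ocomp[OF K_sub]) (auto simp: ocomp_def)
qed

section \<open>Metrics that are diagonal in the decomposition\<close>

definition diag_metric :: "nat set \<Rightarrow> (nat \<Rightarrow> real) \<Rightarrow> 'a \<Rightarrow> 'a \<Rightarrow> real" where
  "diag_metric J x Y Z = (\<Sum>i\<in>J. x i * inner (proj (m i) Y) (proj (m i) Z))"

lemma diag_metric_weighted_inner:
  assumes J: "J \<subseteq> {1..s}"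
  shows "diag_metric J x Y Z = weighted_inner (Sigma J mbasis) snd (\<lambda>p. x (fst p)) Y Z"
proof -
  have fin: "finite J" "\<And>i. i \<in> J \<Longrightarrow> finite (mbasis i)"
    using finite_subset[OF J] finite_onb[OF m_subspace] J by blast+
  have "diag_metric J x Y Z = (\<Sum>i\<in>J. \<Sum>c\<in>mbasis i. x i * inner Y c * inner Z c)"
    unfolding diag_metric_def using J
    by (intro sum.cong refl) (auto simp: inner_proj_proj[OF m_subspace] sum_distrib_left mult.assoc)
  also have "\<dots> = weighted_inner (Sigma J mbasis) snd (\<lambda>p. x (fst p)) Y Z"
    unfolding weighted_inner_def by (simp add: sum_Sigma_pairs[OF fin])
  finally show ?thesis .
qed

lemma diag_metric_restrict:
  assumes "J \<subseteq> J'" "J' \<subseteq> {1..s}" "Y \<in> msum J"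
  shows "diag_metric J' x Y Z = diag_metric J x Y Z"
  unfolding diag_metric_def
proof (rule sum.mono_neutral_right)
  show "finite J'" "J \<subseteq> J'" using assms finite_subset by auto
  show "\<forall>i\<in>J' - J. x i * inner (proj (m i) Y) (proj (m i) Z) = 0"
  proof
    fix i assume i: "i \<in> J' - J"
    then have "inner Y c = 0" if "c \<in> mbasis i" for c
      using that assms onb_subset[OF m_subspace] msum_orthogonal[of i J Y c] by blast
    then show "x i * inner (proj (m i) Y) (proj (m i) Z) = 0"
      using i assms(2) by (auto simp: inner_proj_proj[OF m_subspace])
  qed
qed

lemma diag_metric_proj:
  assumes J: "J \<subseteq> {1..s}"
  shows "diag_metric J x (proj (msum J) Y) (proj (msum J) Z) = diag_metric J x Y Z"
proof -
  have "inner (proj (msum J) v) (snd p) = inner v (snd p)" if "p \<in> Sigma J mbasis" for v p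
    using that span_Sigma_mbasis[OF J]
    by (intro proj_inner) (auto simp: msum_def intro: span_base)
  then show ?thesis
    unfolding diag_metric_weighted_inner[OF J] weighted_inner_def by simp
qed

definition diag_onb :: "nat set \<Rightarrow> (nat \<Rightarrow> real) \<Rightarrow> 'a set \<Rightarrow> bool" where
  "diag_onb J x B \<longleftrightarrow> finite B \<and> span B = msum J \<and> orthonormal_on (diag_metric J x) B"

lemma trace_diag_onb:
  assumes J: "J \<subseteq> {1..s}" and x: "\<forall>i\<in>J. x i > 0" and B: "diag_onb J x B" and \<phi>: "bilinear \<phi>"
  shows "(\<Sum>b\<in>B. \<phi> b b) = (\<Sum>p\<in>Sigma J mbasis. \<phi> (snd p) (snd p) / x (fst p))"
  using B x by (intro trace_weighted_onb[OF finite_Sigma_mbasis[OF J] orthonormal_Sigma_mbasis[OF J] _ _ _ _ \<phi>])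
    (auto simp: diag_onb_def span_Sigma_mbasis[OF J] diag_metric_weighted_inner[OF J, abs_def])

lemma gonb_diag_onb:
  assumes J: "J \<subseteq> {1..s}" and x: "\<forall>i\<in>J. x i > 0"
    and g: "\<forall>Y\<in>msum J. \<forall>Z\<in>msum J. gf Y Z = diag_metric J x Y Z"
  shows "diag_onb J x (gonb gf (msum J))"
proof -
  obtain B where B: "finite B" "span B = msum J" "orthonormal_on (diag_metric J x) B"
    using weighted_onb_exists[OF finite_Sigma_mbasis[OF J] orthonormal_Sigma_mbasis[OF J], of "\<lambda>p. x (fst p)"] x
    by (auto simp: span_Sigma_mbasis[OF J] diag_metric_weighted_inner[OF J, abs_def])
  then have "B \<subseteq> msum J" using span_superset by blast
  then have "\<exists>B. finite B \<and> B \<subseteq> msum J \<and> span B = msum J \<and> (\<forall>e\<in>B. \<forall>f\<in>B. gf e f = (if e = f then 1 else 0))"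
    using B g by (auto simp: orthonormal_on_def subset_iff intro!: exI[of _ B])
  then have "finite (gonb gf (msum J)) \<and> gonb gf (msum J) \<subseteq> msum J \<and> span (gonb gf (msum J)) = msum J \<and>
      (\<forall>e\<in>gonb gf (msum J). \<forall>f\<in>gonb gf (msum J). gf e f = (if e = f then 1 else 0))"
    unfolding gonb_def by (rule someI_ex)
  then show ?thesis using g by (auto simp: diag_onb_def orthonormal_on_def subset_iff)
qed

lemma onb_diag_onb:
  assumes C: "C \<subseteq> {1..s}"
  shows "diag_onb C (\<lambda>_. 1) (onb (msum C))"
proof -
  have W: "subspace (msum C)" by (simp add: msum_def)
  have "diag_metric C (\<lambda>_. 1) b b' = inner b b'" if "b' \<in> onb (msum C)" for b b'
    using that onb_subset[OF W] span_Sigma_mbasis[OF C]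
    by (simp add: diag_metric_weighted_inner[OF C] weighted_inner_unit_weights[OF finite_Sigma_mbasis[OF C]
          orthonormal_Sigma_mbasis[OF C]] subset_iff)
  then show ?thesis
    using finite_onb[OF W] span_onb[OF W] orthonormal_onb[OF W]
    by (simp add: diag_onb_def orthonormal_on_def orthonormal_family_def)
qed

definition structure_coeff :: "nat \<Rightarrow> nat \<Rightarrow> nat \<Rightarrow> real" where
  "structure_coeff i j k = (\<Sum>a\<in>mbasis i. \<Sum>b\<in>mbasis j. \<Sum>c\<in>mbasis k. (inner (br a b) c)\<^sup>2)"

definition killing_trace :: "nat \<Rightarrow> real" where
  "killing_trace i = (\<Sum>c\<in>mbasis i. killing br c c)"

lemma symmetric3_structure_coeff: "symmetric3 structure_coeff"
  unfolding symmetric3_def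
proof (intro allI conjI)
  fix i j k
  have swap12: "(inner (br a b) c)\<^sup>2 = (inner (br b a) c)\<^sup>2" for a b c
    using br_antisym[of a b] by simp
  have "structure_coeff i j k = (\<Sum>a\<in>mbasis i. \<Sum>b\<in>mbasis j. \<Sum>c\<in>mbasis k. (inner (br b a) c)\<^sup>2)"
    unfolding structure_coeff_def by (simp only: swap12)
  also have "\<dots> = structure_coeff j i k"
    unfolding structure_coeff_def by (rule sum.swap)
  finally show "structure_coeff i j k = structure_coeff j i k" .
  have swap23: "(inner (br a b) c)\<^sup>2 = (inner (br a c) b)\<^sup>2" for a b c
    using inner_br_skew[of a b c] by (simp add: inner_commute)
  have "structure_coeff i j k = (\<Sum>a\<in>mbasis i. \<Sum>b\<in>mbasis j. \<Sum>c\<in>mbasis k. (inner (br a c) b)\<^sup>2)"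
    unfolding structure_coeff_def by (simp only: swap23)
  also have "\<dots> = structure_coeff i k j"
    unfolding structure_coeff_def by (rule sum.cong[OF refl], rule sum.swap)
  finally show "structure_coeff i j k = structure_coeff i k j" .
qed

lemma structure_coeff_nonneg: "structure_coeff i j k \<ge> 0"
  unfolding structure_coeff_def by (intro sum_nonneg) simp

lemma brkt_eq_structure_coeff:
  assumes "i \<in> {1..s}"
  shows "brkt br m i j k = structure_coeff i j k"
proof -
  have "brkt br m i j k = structure_coeff j k i"
    unfolding brkt_def structure_coeff_def by (simp add: norm_proj_squared[OF m_subspace[OF assms]])
  then show ?thesis using symmetric3_perms(4)[OF symmetric3_structure_coeff, of i j k] by simp
qed

lemma structure_coeff_vanish:
  assumes S: "lie_subalg br S" "h \<subset> S"
    and ijk: "i \<in> Jidx s m h S" "j \<in> Jidx s m h S" "k \<in> {1..s} - Jidx s m h S"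
  shows "structure_coeff i j k = 0"
proof -
  have "inner (br a b) c = 0" if "a \<in> mbasis i" "b \<in> mbasis j" "c \<in> mbasis k" for a b c
  proof -
    have "a \<in> S" "b \<in> S" "c \<in> ocomp UNIV S"
      using that ijk Jidx_subalgebra(1)[OF S] m_subset_or_orthogonal[OF S] onb_subset[OF m_subspace]
      by blast+
    moreover from this have "br a b \<in> S" using S(1) unfolding lie_subalg_def by blast
    ultimately have "inner c (br a b) = 0" by (simp add: ocomp_def)
    then show ?thesis by (simp add: inner_commute)
  qed
  then show ?thesis unfolding structure_coeff_def by simp
qed

lemma bilinear_killing: "bilinear (killing br)"
  unfolding bilinear_def killing_def
  by (auto intro!: linearI simp: bilinear_ladd[OF bilinear_br] bilinear_radd[OF bilinear_br]
      bilinear_lmul[OF bilinear_br] bilinear_rmul[OF bilinear_br] inner_add_left sum.distrib sum_distrib_left)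

lemma bracket_trace:
  assumes I: "I \<subseteq> {1..s}" "\<forall>i\<in>I. w i > 0" "diag_onb I w A"
    and J: "J \<subseteq> {1..s}" "\<forall>j\<in>J. v j > 0" "diag_onb J v B"
    and P: "P \<subseteq> {1..s}"
  shows "(\<Sum>a\<in>A. \<Sum>b\<in>B. diag_metric P u (br a b) (br a b))
       = (\<Sum>i\<in>I. \<Sum>j\<in>J. \<Sum>k\<in>P. u k / (w i * v j) * structure_coeff i j k)"
proof -
  let ?G = "diag_metric P u"
  have lin: "linear (br a)" "linear (\<lambda>y. br y b)" for a b
    using bilinear_br unfolding bilinear_def by blast+
  have G: "bilinear ?G"
    using bilinear_weighted_inner by (simp add: diag_metric_weighted_inner[OF P, abs_def])
  have "(\<Sum>a\<in>A. \<Sum>b\<in>B. ?G (br a b) (br a b))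
      = (\<Sum>a\<in>A. \<Sum>q\<in>Sigma J mbasis. (1 / v (fst q)) * ?G (br a (snd q)) (br a (snd q)))"
    by (intro sum.cong refl trans[OF trace_diag_onb[OF J bilinear_compose_linear[OF G lin(1) lin(1)]]])
      simp
  also have "\<dots> = (\<Sum>r\<in>Sigma I mbasis. \<Sum>q\<in>Sigma J mbasis.
                    ?G (br (snd r) (snd q)) (br (snd r) (snd q)) / (w (fst r) * v (fst q)))"
    by (subst trace_diag_onb[OF I bilinear_scaled_sum[OF bilinear_compose_linear[OF G lin(2) lin(2)]]])
      (simp add: sum_divide_distrib ac_simps)
  also have "\<dots> = (\<Sum>r\<in>Sigma I mbasis. \<Sum>q\<in>Sigma J mbasis. \<Sum>p\<in>Sigma P mbasis.
                    (\<lambda>i j k. u k / (w i * v j)) (fst r) (fst q) (fst p) *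
                    (\<lambda>a b c. (inner (br a b) c)\<^sup>2) (snd r) (snd q) (snd p))"
    by (simp add: diag_metric_weighted_inner[OF P] weighted_inner_def sum_divide_distrib power2_eq_square
        mult.assoc)
  also have "\<dots> = (\<Sum>i\<in>I. \<Sum>j\<in>J. \<Sum>k\<in>P. u k / (w i * v j) * structure_coeff i j k)"
    unfolding structure_coeff_def
    using I(1) J(1) P finite_onb[OF m_subspace] finite_subset[OF _ finite_atLeastAtMost]
    by (intro sum_Sigma3) blast+
  finally show ?thesis .
qed

lemma scal_msum:
  assumes J: "J \<subseteq> {1..s}" and x: "\<forall>i\<in>J. x i > 0"
    and g: "\<forall>Y\<in>msum J. \<forall>Z\<in>msum J. gf Y Z = diag_metric J x Y Z"
  shows "scal br gf (msum J) = scal_coeff killing_trace x structure_coeff J"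
proof -
  let ?B = "gonb gf (msum J)"
  have B: "diag_onb J x ?B" by (rule gonb_diag_onb[OF J x g])
  have fin: "finite J" "\<And>i. i \<in> J \<Longrightarrow> finite (mbasis i)"
    using finite_subset[OF J] finite_onb[OF m_subspace] J by blast+
  have "(\<Sum>e\<in>?B. killing br e e) = (\<Sum>i\<in>J. killing_trace i / x i)"
    by (simp add: trace_diag_onb[OF J x B bilinear_killing] sum_Sigma_pairs[OF fin] killing_trace_def
        sum_divide_distrib)
  moreover have "gf (proj (msum J) v) (proj (msum J) v) = diag_metric J x v v" for v
    using g proj_in[of "msum J"] diag_metric_proj[OF J] by (simp add: msum_def)
  ultimately show ?thesis
    unfolding scal_def scal_coeff_def by (simp add: bracket_trace[OF J x B J x B J])
qed

lemma cross_msum: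
  assumes J: "J \<subseteq> {1..s}" and x: "\<forall>i\<in>J. x i > 0"
    and g: "\<forall>Y\<in>msum J. \<forall>Z\<in>msum J. gf Y Z = diag_metric J x Y Z" and C: "C \<subseteq> {1..s}"
  shows "(\<Sum>a\<in>gonb gf (msum J). \<Sum>b\<in>onb (msum C). (norm (proj (msum C) (br a b)))\<^sup>2)
    = cross_coeff x structure_coeff J C"
proof -
  have "(norm (proj (msum C) v))\<^sup>2 = diag_metric C (\<lambda>_. 1) v v" for v
  proof -
    have "proj (msum C) v \<in> span (snd ` Sigma C mbasis)"
      using proj_in[of "msum C" v] span_Sigma_mbasis[OF C] by (simp add: msum_def)
    then have "(norm (proj (msum C) v))\<^sup>2 = diag_metric C (\<lambda>_. 1) (proj (msum C) v) (proj (msum C) v)"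
      by (simp add: diag_metric_weighted_inner[OF C] weighted_inner_unit_weights finite_Sigma_mbasis[OF C]
          orthonormal_Sigma_mbasis[OF C] dot_square_norm)
    then show ?thesis by (simp add: diag_metric_proj[OF C])
  qed
  then show ?thesis
    using bracket_trace[OF J x gonb_diag_onb[OF J x g] C _ onb_diag_onb[OF C] C, of "\<lambda>_. 1"]
    by (simp add: cross_coeff_def)
qed

lemma msum_mono: "J \<subseteq> J' \<Longrightarrow> msum J \<subseteq> msum J'"
  unfolding msum_def by (rule span_mono) blast

lemma diag_metric_on_subsum:
  assumes "J \<subseteq> J'" "J' \<subseteq> {1..s}"
    and "\<forall>Y\<in>msum J'. \<forall>Z\<in>msum J'. gf Y Z = diag_metric J' x Y Z"
  shows "\<forall>Y\<in>msum J. \<forall>Z\<in>msum J. gf Y Z = diag_metric J x Y Z"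
proof (intro ballI)
  fix Y Z assume YZ: "Y \<in> msum J" "Z \<in> msum J"
  then have "gf Y Z = diag_metric J' x Y Z" using assms(3) msum_mono[OF assms(1)] by blast
  also have "\<dots> = diag_metric J x Y Z" by (rule diag_metric_restrict[OF assms(1,2) YZ(1)])
  finally show "gf Y Z = diag_metric J x Y Z" .
qed

lemma Shat_diag:
  assumes K: "lie_subalg br K" "h \<subset> K" and x: "\<forall>i\<in>Jidx s m h K. x i > 0"
    and g: "\<forall>Y\<in>msum (Jidx s m h K). \<forall>Z\<in>msum (Jidx s m h K). gf Y Z = diag_metric (Jidx s m h K) x Y Z"
  shows "Shat br h gf K = scal_coeff killing_trace x structure_coeff (Jidx s m h K)
    - 1/2 * cross_coeff x structure_coeff (Jidx s m h K) ({1..s} - Jidx s m h K)"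
proof -
  have "Jidx s m h K \<subseteq> {1..s}" using Jidx_subalgebra(1)[OF K] by blast
  then show ?thesis
    unfolding Shat_def Jidx_subalgebra(2)[OF K] ocomp_UNIV_subalgebra[OF K]
    using scal_msum[OF _ x g] cross_msum[OF _ x g] by simp
qed

lemma Shat_chain_coordinates:
  assumes K: "lie_subalg br K" and K': "lie_subalg br K'" "h \<subset> K'" "K' \<subset> K"
    and x: "\<forall>i\<in>Jidx s m h K. x i > 0"
    and g: "\<forall>Y\<in>ocomp K h. \<forall>Z\<in>ocomp K h. gf Y Z = diag_metric (Jidx s m h K) x Y Z"
    and N: "N = Jidx s m h K'" and L: "L = Jidx s m h K - N" and C: "C = {1..s} - Jidx s m h K"
  shows "Shat br h gf K = scal_coeff killing_trace x structure_coeff (N \<union> L)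
           - 1/2 * cross_coeff x structure_coeff (N \<union> L) C"
    and "Shat br h gf K' = scal_coeff killing_trace x structure_coeff N
           - 1/2 * cross_coeff x structure_coeff N (L \<union> C)"
    and "scal br gf (ocomp K' h) = scal_coeff killing_trace x structure_coeff N"
    and "scal br gf (ocomp K K') = scal_coeff killing_trace x structure_coeff L"
    and "\<forall>i\<in>N. \<forall>j\<in>N. \<forall>k\<in>L. structure_coeff i j k = 0"
    and "\<forall>i\<in>N. \<forall>j\<in>L. \<forall>k\<in>C. structure_coeff i j k = 0"
proof -
  have hK: "h \<subset> K" using K' by blast
  have sub: "N \<subseteq> Jidx s m h K" "Jidx s m h K \<subseteq> {1..s}"
    using Jidx_subalgebra(1)[OF K hK] Jidx_subalgebra(1)[OF K'(1,2)] K'(3) N by auto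
  then have JK: "Jidx s m h K = N \<union> L" and NC: "{1..s} - N = L \<union> C" using L C by auto
  have gK: "\<forall>Y\<in>msum (Jidx s m h K). \<forall>Z\<in>msum (Jidx s m h K). gf Y Z = diag_metric (Jidx s m h K) x Y Z"
    using g Jidx_subalgebra(2)[OF K hK] by simp
  have gN: "\<forall>Y\<in>msum N. \<forall>Z\<in>msum N. gf Y Z = diag_metric N x Y Z"
    by (rule diag_metric_on_subsum[OF sub gK])
  have gL: "\<forall>Y\<in>msum L. \<forall>Z\<in>msum L. gf Y Z = diag_metric L x Y Z"
    using L by (intro diag_metric_on_subsum[OF _ sub(2) gK]) blast
  show "Shat br h gf K = scal_coeff killing_trace x structure_coeff (N \<union> L)
      - 1/2 * cross_coeff x structure_coeff (N \<union> L) C"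
    using Shat_diag[OF K hK x gK] JK C by simp
  show "Shat br h gf K' = scal_coeff killing_trace x structure_coeff N
      - 1/2 * cross_coeff x structure_coeff N (L \<union> C)"
    using Shat_diag[OF K'(1,2)] x sub gN NC N by auto
  show "scal br gf (ocomp K' h) = scal_coeff killing_trace x structure_coeff N"
    using scal_msum[OF _ _ gN] Jidx_subalgebra(2)[OF K'(1,2)] sub x N by auto
  show "scal br gf (ocomp K K') = scal_coeff killing_trace x structure_coeff L"
    using scal_msum[OF _ _ gL] ocomp_subalgebras[OF K K'(1,2)] K'(3) sub x N L by auto
  show "\<forall>i\<in>N. \<forall>j\<in>N. \<forall>k\<in>L. structure_coeff i j k = 0"
    using structure_coeff_vanish[OF K'(1,2)] sub N L by blast
  show "\<forall>i\<in>N. \<forall>j\<in>L. \<forall>k\<in>C. structure_coeff i j k = 0"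
    using structure_coeff_vanish[OF K hK] sub L C by blast
qed

end

theorem mainTheorem11:
  fixes br :: "'a::euclidean_space \<Rightarrow> 'a \<Rightarrow> 'a"
    and h K K' :: "'a set"
    and s :: nat and m :: "nat \<Rightarrow> 'a set"
    and gf :: "'a \<Rightarrow> 'a \<Rightarrow> real" and x :: "nat \<Rightarrow> real"
  assumes lie: "lie_algebra br"
    and Qinv: "Q_ad_invariant br"
    and hsub: "lie_subalg br h"
    and dimM: "dim (ocomp UNIV h) \<ge> 3"
    and H: "hypH br h"
    and dec: "isotropy_decomp br h s m"
    and Ksub: "lie_subalg br K" and K'sub: "lie_subalg br K'"
    and hK': "h \<subset> K'" and K'K: "K' \<subset> K"
    and gM: "Mk br h K gf"
    and xpos: "\<forall>i\<in>Jidx s m h K. x i > 0"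
    and gdiag: "\<forall>Y\<in>ocomp K h. \<forall>Z\<in>ocomp K h.
                  gf Y Z = (\<Sum>i\<in>Jidx s m h K. x i * inner (proj (m i) Y) (proj (m i) Z))"
  shows "Shat br h gf K =
           scal br gf (ocomp K' h) + scal br gf (ocomp K K')
           - 1/2 * (\<Sum>i\<in>Jidx s m h K. \<Sum>j\<in>{1..s} - Jidx s m h K. \<Sum>k\<in>{1..s} - Jidx s m h K.
                      brkt br m i j k / x i)
           - 1/4 * (\<Sum>i\<in>Jidx s m h K - Jidx s m h K'. \<Sum>j\<in>Jidx s m h K - Jidx s m h K'.
                    \<Sum>k\<in>Jidx s m h K'.
                      brkt br m i j k * (x k / (x i * x j) + 2 * x i / (x j * x k)))
       \<and> Shat br h gf K \<le> Shat br h gf K' + scal br gf (ocomp K K')"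
proof -
  interpret isotropy_decomposition br h s m using lie Qinv H dec by unfold_locales
  define N L C where "N = Jidx s m h K'" and "L = Jidx s m h K - N" and "C = {1..s} - Jidx s m h K"
  have "\<forall>Y\<in>ocomp K h. \<forall>Z\<in>ocomp K h. gf Y Z = diag_metric (Jidx s m h K) x Y Z"
    using gdiag by (simp add: diag_metric_def)
  note coords = Shat_chain_coordinates[OF Ksub K'sub hK' K'K xpos this N_def L_def C_def]
  have JK: "Jidx s m h K = N \<union> L" "Jidx s m h K \<subseteq> {1..s}"
    using Jidx_subalgebra(1)[OF Ksub] Jidx_subalgebra(1)[OF K'sub hK'] hK' K'K
    by (auto simp: N_def L_def)
  have fin: "finite N" "finite L" "finite C" using JK finite_subset by (auto simp: C_def)
  have disj: "N \<inter> L = {}" "L \<inter> C = {}" "N \<inter> C = {}" using JK by (auto simp: L_def C_def)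
  have brkt: "brkt br m i j k = structure_coeff i j k" if "i \<in> N \<union> L" for i j k
    using brkt_eq_structure_coeff JK that by blast
  have x: "\<forall>i\<in>N \<union> L. x i > 0" using xpos JK(1) by simp
  have "(\<Sum>i\<in>Jidx s m h K. \<Sum>j\<in>C. \<Sum>k\<in>C. brkt br m i j k / x i) = cross_coeff x structure_coeff (N \<union> L) C"
    unfolding cross_coeff_def JK(1) using brkt by simp
  moreover have "(\<Sum>i\<in>L. \<Sum>j\<in>L. \<Sum>k\<in>N. brkt br m i j k * (x k / (x i * x j) + 2 * x i / (x j * x k)))
      = (\<Sum>i\<in>L. \<Sum>j\<in>L. \<Sum>k\<in>N. structure_coeff i j k * (x k / (x i * x j) + 2 * x i / (x j * x k)))"
    using brkt by simp
  ultimately have "Shat br h gf K = scal br gf (ocomp K' h) + scal br gf (ocomp K K')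
      - 1/2 * (\<Sum>i\<in>Jidx s m h K. \<Sum>j\<in>C. \<Sum>k\<in>C. brkt br m i j k / x i)
      - 1/4 * (\<Sum>i\<in>L. \<Sum>j\<in>L. \<Sum>k\<in>N. brkt br m i j k * (x k / (x i * x j) + 2 * x i / (x j * x k)))"
    unfolding coords(1,3,4) scal_coeff_union[OF fin(1,2) disj(1) symmetric3_structure_coeff coords(5)]
    by simp
  moreover have "Shat br h gf K \<le> Shat br h gf K' + scal br gf (ocomp K K')"
    unfolding coords(1,2,4)
    by (rule scal_cross_coeff_le[OF fin disj symmetric3_structure_coeff structure_coeff_nonneg x coords(5,6)])
  ultimately show ?thesis by (simp add: N_def L_def C_def)
qed

end
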